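(* Let $k\ge1$ be an integer with $k\le n$ and $\lambda_k>0$, and let $f\in\ell^2(V,w)$ be nonnegative with $\|f\|_w=1$. Then there exist thresholds $0=t_0\le t_1\le\dots\le t_{2k}=\max_v f(v)$ such that the $(2k+1)$-step approximation $g$ of $f$ with these thresholds satisfies $$\|f-g\|_w^2\le\frac{4\,\mathcal R(f)}{\lambda_k}.$$
   Context: $G=(V,E,w)$ finite undirected, positive edge weights, $w(v)=\sum_{u\sim v}w(u,v)\ge1$, $n=|V|$. $\|f\|_w^2=\sum_v w(v)f(v)^2$; $\mathcal R(f)=\sum_{\{u,v\}\in E}w(u,v)(f(u)-f(v))^2/\|f\|_w^2$. $\lambda_1\le\dots\le\lambda_n$ are the eigenvalues of the normalized Laplacian $I-D^{-1/2}AD^{-1/2}$. Given thresholds $0=t_0\le t_1\le\dots\le t_{2k}$, the $(2k+1)$-step approximation of $f$ is the function $g(v)=$ the element of $\{t_0,\dots,t_{2k}\}$ closest to $f(v)$ (ties broken arbitrarily). *)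

theory Defs
  imports "Jordan_Normal_Form.Char_Poly" "HOL-Library.Multiset"
begin

text \<open>Weighted graph on vertex set V = {0..<n}; w u v is the edge weight
  (positive iff u, v adjacent, 0 otherwise), assumed symmetric.\<close>

definition wdeg :: "nat \<Rightarrow> (nat \<Rightarrow> nat \<Rightarrow> real) \<Rightarrow> nat \<Rightarrow> real" where
  "wdeg n w v = (\<Sum>u<n. w v u)"

definition wnorm2 :: "nat \<Rightarrow> (nat \<Rightarrow> nat \<Rightarrow> real) \<Rightarrow> (nat \<Rightarrow> real) \<Rightarrow> real" where
  "wnorm2 n w f = (\<Sum>v<n. wdeg n w v * (f v)\<^sup>2)"

text \<open>Sum over (unordered) edges {u,v} of w(u,v)(f u - f v)^2, written as half
  the sum over ordered pairs (loops contribute 0).\<close>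
definition rayleigh :: "nat \<Rightarrow> (nat \<Rightarrow> nat \<Rightarrow> real) \<Rightarrow> (nat \<Rightarrow> real) \<Rightarrow> real" where
  "rayleigh n w f = ((\<Sum>u<n. \<Sum>v<n. w u v * (f u - f v)\<^sup>2) / 2) / wnorm2 n w f"

definition norm_laplacian :: "nat \<Rightarrow> (nat \<Rightarrow> nat \<Rightarrow> real) \<Rightarrow> real mat" where
  "norm_laplacian n w = mat n n (\<lambda>(i, j). (if i = j then 1 else 0)
       - w i j / sqrt (wdeg n w i * wdeg n w j))"

text \<open>k-th smallest eigenvalue (1-indexed, counted with algebraic multiplicity).\<close>
definition lap_eig :: "nat \<Rightarrow> (nat \<Rightarrow> nat \<Rightarrow> real) \<Rightarrow> nat \<Rightarrow> real" where
  "lap_eig n w k = sorted_list_of_multiset (proots (char_poly (norm_laplacian n w))) ! (k - 1)"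

definition is_step_approx :: "nat \<Rightarrow> nat \<Rightarrow> (nat \<Rightarrow> real) \<Rightarrow> (nat \<Rightarrow> real) \<Rightarrow> (nat \<Rightarrow> real) \<Rightarrow> bool" where
  "is_step_approx n k t f g \<longleftrightarrow>
     (\<forall>v<n. (\<exists>i\<le>2*k. g v = t i) \<and> (\<forall>i\<le>2*k. \<bar>f v - g v\<bar> \<le> \<bar>f v - t i\<bar>))"

end

theory Submission
  imports Defs "HOL-Computational_Algebra.Fundamental_Theorem_Algebra"
begin

text \<open>
  Choose the thresholds greedily from \<open>t\<^sub>0 = 0\<close> upwards so that each tent
  \<open>v \<mapsto> max 0 (min (f v - t\<^sub>i) (t\<^sub>i\<^sub>+\<^sub>1 - f v))\<close> has squared norm exactly
  \<open>C = 2 R(f) / (k \<lambda>\<^sub>k)\<close>, stopping at \<open>max f\<close>. Pointwise \<open>|f - g|\<close> is bounded by the tent of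
  the interval containing \<open>f v\<close>, so once \<open>t\<^sub>2\<^sub>k = max f\<close> the error is at most \<open>2k C = 4 R(f) / \<lambda>\<^sub>k\<close>.
  The maximum is reached within \<open>2k\<close> steps because the tents are disjointly supported and their
  energies add up to at most the energy of \<open>f\<close>: if all \<open>2k\<close> tents had mass \<open>C\<close>, then \<open>k\<close> of them
  would have Rayleigh quotient below \<open>\<lambda>\<^sub>k / 2\<close>, whereas by Courant-Fischer some combination of any
  \<open>k\<close> of them has Rayleigh quotient at least \<open>\<lambda>\<^sub>k\<close>, and disjointness loses at most a factor 2 in
  the energy. If \<open>R(f) = 0\<close>, the same bound applied to indicators of level sets shows that \<open>f\<close>
  takes fewer than \<open>k\<close> values, and these serve as thresholds.
\<close>

lemma symmetric_mat_index:
  assumes "A \<in> carrier_mat n n" "transpose_mat A = A" "i < n" "j < n"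
  shows "A $$ (i, j) = A $$ (j, i)"
  using assms by (metis index_transpose_mat(1) carrier_matD)

lemma real_mat_complex_eigen_Re_Im:
  fixes A :: "real mat"
  assumes A: "A \<in> carrier_mat n n" and v: "v \<in> carrier_vec n"
    and ev: "map_mat complex_of_real A *\<^sub>v v = z \<cdot>\<^sub>v v" and i: "i < n"
  shows "(\<Sum>j=0..<n. A $$ (i, j) * Re (v $ j)) = Re z * Re (v $ i) - Im z * Im (v $ i)"
    and "(\<Sum>j=0..<n. A $$ (i, j) * Im (v $ j)) = Re z * Im (v $ i) + Im z * Re (v $ i)"
proof -
  have "(\<Sum>j=0..<n. complex_of_real (A $$ (i, j)) * v $ j) = (map_mat complex_of_real A *\<^sub>v v) $ i"
    using A v i by (auto simp: scalar_prod_def intro!: sum.cong)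
  also have "\<dots> = z * v $ i" using ev v i by simp
  finally have eq: "(\<Sum>j=0..<n. complex_of_real (A $$ (i, j)) * v $ j) = z * v $ i" .
  show "(\<Sum>j=0..<n. A $$ (i, j) * Re (v $ j)) = Re z * Re (v $ i) - Im z * Im (v $ i)"
    using arg_cong[OF eq, of Re] by (simp add: Re_sum)
  show "(\<Sum>j=0..<n. A $$ (i, j) * Im (v $ j)) = Re z * Im (v $ i) + Im z * Re (v $ i)"
    using arg_cong[OF eq, of Im] by (simp add: Im_sum algebra_simps)
qed

lemma real_symmetric_mat_eigenvalue_real:
  fixes A :: "real mat"
  assumes A: "A \<in> carrier_mat n n" and sym: "transpose_mat A = A"
    and v: "v \<in> carrier_vec n" "v \<noteq> 0\<^sub>v n" and ev: "map_mat complex_of_real A *\<^sub>v v = z \<cdot>\<^sub>v v"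
  shows "Im z = 0"
proof -
  define a where "a i = Re (v $ i)" for i
  define b where "b i = Im (v $ i)" for i
  note re = real_mat_complex_eigen_Re_Im(1)[OF A v(1) ev, folded a_def b_def]
  note im = real_mat_complex_eigen_Re_Im(2)[OF A v(1) ev, folded a_def b_def]
  txt \<open>Symmetry of \<open>A\<close> gives \<open>b\<^sup>T A a = a\<^sup>T A b\<close>, and the two sides differ by
    \<open>Im z (|a|\<^sup>2 + |b|\<^sup>2)\<close>.\<close>
  have "(\<Sum>i=0..<n. b i * (\<Sum>j=0..<n. A $$ (i, j) * a j))
      = (\<Sum>j=0..<n. \<Sum>i=0..<n. a j * A $$ (j, i) * b i)"
    by (subst sum.swap) (auto simp: sum_distrib_left symmetric_mat_index[OF A sym] mult_ac
        intro!: sum.cong)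
  also have "\<dots> = (\<Sum>i=0..<n. a i * (\<Sum>j=0..<n. A $$ (i, j) * b j))"
    by (simp add: sum_distrib_left mult.assoc)
  moreover have "(\<Sum>i=0..<n. b i * (\<Sum>j=0..<n. A $$ (i, j) * a j))
      = (\<Sum>i=0..<n. b i * (Re z * a i - Im z * b i))"
    by (intro sum.cong refl) (simp add: re)
  moreover have "(\<Sum>i=0..<n. a i * (\<Sum>j=0..<n. A $$ (i, j) * b j))
      = (\<Sum>i=0..<n. a i * (Re z * b i + Im z * a i))"
    by (intro sum.cong refl) (simp add: im)
  ultimately have "Im z * (\<Sum>i=0..<n. a i ^ 2 + b i ^ 2) = 0"
    by (simp add: sum.distrib sum_subtractf sum_distrib_left algebra_simps power2_eq_square)
  moreover obtain i where i: "i < n" "v $ i \<noteq> 0"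
    using v by (metis eq_vecI carrier_vecD index_zero_vec)
  hence "0 < (\<Sum>i=0..<n. a i ^ 2 + b i ^ 2)"
    by (intro sum_pos2[of _ i]) (auto simp: a_def b_def complex_eq_iff sum_power2_gt_zero_iff)
  ultimately show ?thesis by simp
qed

lemma real_symmetric_mat_eigenvector:
  fixes A :: "real mat"
  assumes A: "A \<in> carrier_mat n n" and sym: "transpose_mat A = A" and n: "0 < n"
  shows "\<exists>l v. v \<in> carrier_vec n \<and> v \<noteq> 0\<^sub>v n \<and> A *\<^sub>v v = l \<cdot>\<^sub>v v"
proof -
  define Ac where "Ac = map_mat complex_of_real A"
  have Ac: "Ac \<in> carrier_mat n n" using A by (simp add: Ac_def)
  have "\<not> constant (poly (char_poly Ac))"
    unfolding constant_degree using degree_monic_char_poly[OF Ac] n by simp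
  then obtain z where "poly (char_poly Ac) z = 0" using fundamental_theorem_of_algebra by blast
  hence "eigenvalue Ac z" using eigenvalue_root_char_poly[OF Ac] by simp
  then obtain v where v: "v \<in> carrier_vec n" "v \<noteq> 0\<^sub>v n" and ev: "Ac *\<^sub>v v = z \<cdot>\<^sub>v v"
    unfolding eigenvalue_def eigenvector_def using Ac by auto
  have z: "Im z = 0" using real_symmetric_mat_eigenvalue_real[OF A sym v ev[unfolded Ac_def]] .
  txt \<open>Both the real and the imaginary part of \<open>v\<close> solve the real eigenvalue equation;
    one of them is nonzero.\<close>
  have "A *\<^sub>v vec n (\<lambda>i. Re (v $ i)) = Re z \<cdot>\<^sub>v vec n (\<lambda>i. Re (v $ i))"
    "A *\<^sub>v vec n (\<lambda>i. Im (v $ i)) = Re z \<cdot>\<^sub>v vec n (\<lambda>i. Im (v $ i))"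
    using A z real_mat_complex_eigen_Re_Im[OF A v(1) ev[unfolded Ac_def]]
    by (auto intro!: eq_vecI simp: scalar_prod_def)
  moreover have "vec n (\<lambda>i. Re (v $ i)) \<noteq> 0\<^sub>v n \<or> vec n (\<lambda>i. Im (v $ i)) \<noteq> 0\<^sub>v n"
    using v by (auto simp: vec_eq_iff complex_eq_iff)
  ultimately show ?thesis by (metis vec_carrier)
qed

lemma real_symmetric_mat_unit_eigenvector:
  fixes A :: "real mat"
  assumes A: "A \<in> carrier_mat n n" and sym: "transpose_mat A = A" and n: "0 < n"
  shows "\<exists>l u. u \<in> carrier_vec n \<and> u \<bullet> u = 1 \<and> A *\<^sub>v u = l \<cdot>\<^sub>v u"
proof -
  obtain l v where v: "v \<in> carrier_vec n" "v \<noteq> 0\<^sub>v n" "A *\<^sub>v v = l \<cdot>\<^sub>v v"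
    using real_symmetric_mat_eigenvector[OF A sym n] by auto
  obtain i where i: "i < n" "v $ i \<noteq> 0" using v by (metis eq_vecI carrier_vecD index_zero_vec)
  have "0 < (\<Sum>j=0..<n. v $ j * v $ j)"
    by (rule sum_pos2[of _ i]) (use i in \<open>auto simp: zero_less_mult_iff\<close>)
  hence "0 < v \<bullet> v" using v by (simp add: scalar_prod_def)
  define u where "u = (1 / sqrt (v \<bullet> v)) \<cdot>\<^sub>v v"
  have "u \<in> carrier_vec n" "u \<bullet> u = 1" "A *\<^sub>v u = l \<cdot>\<^sub>v u"
    using v A \<open>0 < v \<bullet> v\<close> unfolding u_def
    by (simp_all add: mult_mat_vec smult_smult_assoc mult.commute)
  thus ?thesis by blast
qed

definition householder_mat :: "nat \<Rightarrow> real \<Rightarrow> (nat \<Rightarrow> real) \<Rightarrow> real mat" where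
  "householder_mat n c w = mat n n (\<lambda>(i, j). of_bool (i = j) - c * w i * w j)"

lemma householder_mat_carrier: "householder_mat n c w \<in> carrier_mat n n"
  by (simp add: householder_mat_def)

lemma householder_mat_symmetric: "transpose_mat (householder_mat n c w) = householder_mat n c w"
  by (rule eq_matI) (auto simp: householder_mat_def)

lemma householder_mat_involution:
  assumes c: "c * c * (\<Sum>l=0..<n. w l * w l) = 2 * c"
  shows "householder_mat n c w * householder_mat n c w = 1\<^sub>m n"
proof (rule eq_matI)
  let ?ww = "\<Sum>l=0..<n. w l * w l"
  fix i j assume "i < dim_row (1\<^sub>m n)" "j < dim_col (1\<^sub>m n)"
  hence i: "i < n" and j: "j < n" by auto
  have "(householder_mat n c w * householder_mat n c w) $$ (i, j)
      = (\<Sum>l=0..<n. of_bool (i = l) * (of_bool (l = j) - c * w l * w j)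
          - c * w i * (w l * of_bool (l = j)) + c * c * w i * w j * (w l * w l))"
    using i j by (auto simp: householder_mat_def scalar_prod_def algebra_simps intro!: sum.cong)
  also have "\<dots> = (\<Sum>l=0..<n. of_bool (i = l) * (of_bool (l = j) - c * w l * w j))
      - c * w i * (\<Sum>l=0..<n. w l * of_bool (l = j)) + c * c * w i * w j * ?ww"
    by (simp only: sum.distrib sum_subtractf sum_distrib_left)
  also have "(\<Sum>l=0..<n. w l * of_bool (l = j)) = w j"
    using j by (simp add: of_bool_def if_distrib[of "\<lambda>x. _ * x"] cong: if_cong)
  also have "(\<Sum>l=0..<n. of_bool (i = l) * (of_bool (l = j) - c * w l * w j))
      = of_bool (i = j) - c * w i * w j"
    using i by simp
  also have "of_bool (i = j) - c * w i * w j - c * w i * w j + c * c * w i * w j * ?ww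
      = of_bool (i = j) + (c * c * ?ww - 2 * c) * w i * w j"
    by (simp add: algebra_simps)
  finally show "(householder_mat n c w * householder_mat n c w) $$ (i, j) = 1\<^sub>m n $$ (i, j)"
    using i j c by simp
qed (auto simp: householder_mat_def)

lemma householder_reflection:
  fixes u :: "real vec"
  assumes u: "u \<in> carrier_vec n" "u \<bullet> u = 1" and n: "0 < n"
  shows "\<exists>H. H \<in> carrier_mat n n \<and> transpose_mat H = H \<and> H * H = 1\<^sub>m n
           \<and> H *\<^sub>v unit_vec n 0 = u"
proof -
  txt \<open>Reflect in the hyperplane orthogonal to \<open>w = u - e\<^sub>0\<close>.\<close>
  define w where "w l = u $ l - of_bool (l = 0)" for l
  define ww where "ww = (\<Sum>l=0..<n. w l * w l)"
  define c where "c = (if ww = 0 then 0 else 2 / ww)"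
  define H where "H = householder_mat n c w"
  have ww_eq: "ww = - 2 * w 0"
  proof -
    have "(\<Sum>l=Suc 0..<n. w l * w l) = (\<Sum>l=Suc 0..<n. u $ l * u $ l)"
      by (intro sum.cong) (auto simp: w_def)
    moreover have "(\<Sum>l=0..<n. u $ l * u $ l) = 1" using u by (simp add: scalar_prod_def)
    ultimately show ?thesis
      using n unfolding ww_def by (simp add: sum.atLeast_Suc_lessThan w_def algebra_simps)
  qed
  have "H $$ (i, 0) = u $ i" if i: "i < n" for i
  proof (cases "ww = 0")
    case True
    hence "w i = 0" using i unfolding ww_def by (subst (asm) sum_nonneg_eq_0_iff) auto
    thus ?thesis using i n True by (simp add: H_def householder_mat_def c_def w_def)
  next
    case False
    hence "c * w 0 = -1" using ww_eq by (simp add: c_def field_simps)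
    hence "c * w i * w 0 = - w i" by (metis mult.assoc mult.commute mult_minus1_right)
    thus ?thesis using i n by (simp add: H_def householder_mat_def w_def)
  qed
  hence "H *\<^sub>v unit_vec n 0 = u" using u n by (intro eq_vecI) (auto simp: H_def householder_mat_def)
  moreover have "H * H = 1\<^sub>m n"
    unfolding H_def by (rule householder_mat_involution) (simp add: c_def ww_def[symmetric])
  ultimately show ?thesis
    using householder_mat_carrier householder_mat_symmetric unfolding H_def by blast
qed

lemma reflection_conjugate_first_column:
  fixes A H :: "real mat"
  assumes A: "A \<in> carrier_mat n n" and H: "H \<in> carrier_mat n n" "H * H = 1\<^sub>m n"
    and Hu: "H *\<^sub>v unit_vec n 0 = u" and u: "u \<in> carrier_vec n" and Au: "A *\<^sub>v u = l \<cdot>\<^sub>v u"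
    and i: "i < n"
  shows "(H * A * H) $$ (i, 0) = of_bool (i = 0) * l"
proof -
  have "(H * A * H) *\<^sub>v unit_vec n 0 = H *\<^sub>v (A *\<^sub>v (H *\<^sub>v unit_vec n 0))"
  proof -
    have "H * A * H = H * (A * H)" using H A by simp
    also have "\<dots> *\<^sub>v unit_vec n 0 = H *\<^sub>v ((A * H) *\<^sub>v unit_vec n 0)"
      by (rule assoc_mult_mat_vec) (use H A in auto)
    also have "(A * H) *\<^sub>v unit_vec n 0 = A *\<^sub>v (H *\<^sub>v unit_vec n 0)"
      by (rule assoc_mult_mat_vec) (use H A in auto)
    finally show ?thesis .
  qed
  also have "\<dots> = l \<cdot>\<^sub>v (H *\<^sub>v (H *\<^sub>v unit_vec n 0))" using H u Hu Au by (simp add: mult_mat_vec)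
  also have "H *\<^sub>v (H *\<^sub>v unit_vec n 0) = (H * H) *\<^sub>v unit_vec n 0"
    by (rule assoc_mult_mat_vec[symmetric]) (use H in auto)
  finally have "(H * A * H) *\<^sub>v unit_vec n 0 = l \<cdot>\<^sub>v unit_vec n 0" using H by simp
  from arg_cong[OF this, of "\<lambda>x. x $ i"] show ?thesis using H A i by simp
qed

lemma real_symmetric_mat_deflation:
  fixes A :: "real mat"
  assumes A: "A \<in> carrier_mat (Suc m) (Suc m)" and sym: "transpose_mat A = A"
  shows "\<exists>H l A'. H \<in> carrier_mat (Suc m) (Suc m) \<and> transpose_mat H = H \<and> H * H = 1\<^sub>m (Suc m)
           \<and> A' \<in> carrier_mat m m \<and> transpose_mat A' = A'
           \<and> H * A * H = four_block_mat (mat 1 1 (\<lambda>_. l)) (0\<^sub>m 1 m) (0\<^sub>m m 1) A'"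
proof -
  let ?n = "Suc m"
  obtain l u where u: "u \<in> carrier_vec ?n" "u \<bullet> u = 1" and Au: "A *\<^sub>v u = l \<cdot>\<^sub>v u"
    using real_symmetric_mat_unit_eigenvector[OF A sym] by auto
  obtain H where H: "H \<in> carrier_mat ?n ?n" "transpose_mat H = H" "H * H = 1\<^sub>m ?n"
      and Hu: "H *\<^sub>v unit_vec ?n 0 = u"
    using householder_reflection[OF u] by auto
  define B where "B = H * A * H"
  have B: "B \<in> carrier_mat ?n ?n" using H A by (simp add: B_def)
  have symB: "transpose_mat B = B"
  proof -
    have "transpose_mat (H * (A * H)) = transpose_mat (A * H) * transpose_mat H"
      by (rule transpose_mult) (use H A in auto)
    moreover have "transpose_mat (A * H) = transpose_mat H * transpose_mat A"
      by (rule transpose_mult) (use H A in auto)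
    moreover have "B = H * (A * H)" unfolding B_def using H A by simp
    ultimately show ?thesis using H A sym by simp
  qed
  have Bi0: "B $$ (i, 0) = of_bool (i = 0) * l" if "i < ?n" for i
    unfolding B_def by (rule reflection_conjugate_first_column[OF A H(1,3) Hu u(1) Au that])
  have B0j: "B $$ (0, j) = of_bool (j = 0) * l" if "j < ?n" for j
    using Bi0[OF that] symmetric_mat_index[OF B symB, of 0 j] that by simp
  define A' where "A' = mat m m (\<lambda>(i, j). B $$ (Suc i, Suc j))"
  have "B = four_block_mat (mat 1 1 (\<lambda>_. l)) (0\<^sub>m 1 m) (0\<^sub>m m 1) A'"
  proof (rule eq_matI)
    fix i j assume "i < dim_row (four_block_mat (mat 1 1 (\<lambda>_. l)) (0\<^sub>m 1 m) (0\<^sub>m m 1) A')"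
      "j < dim_col (four_block_mat (mat 1 1 (\<lambda>_. l)) (0\<^sub>m 1 m) (0\<^sub>m m 1) A')"
    hence i: "i < ?n" and j: "j < ?n" by (auto simp: A'_def)
    show "B $$ (i, j) = four_block_mat (mat 1 1 (\<lambda>_. l)) (0\<^sub>m 1 m) (0\<^sub>m m 1) A' $$ (i, j)"
    proof (cases "i = 0 \<or> j = 0")
      case True
      thus ?thesis using i j Bi0 B0j by (auto simp: A'_def)
    next
      case False
      then obtain i' j' where "i = Suc i'" "j = Suc j'" by (metis not0_implies_Suc)
      thus ?thesis using i j by (auto simp: A'_def)
    qed
  qed (use B in \<open>auto simp: A'_def\<close>)
  moreover have "transpose_mat A' = A'"
    by (rule eq_matI) (auto simp: A'_def symmetric_mat_index[OF B symB])
  moreover have "A' \<in> carrier_mat m m" by (simp add: A'_def)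
  ultimately show ?thesis using H unfolding B_def by blast
qed

lemma diagonalization_four_block:
  fixes U' D' :: "real mat"
  assumes U'D': "U' \<in> carrier_mat m m" "D' \<in> carrier_mat m m" "diagonal_mat D'"
    "transpose_mat U' * U' = 1\<^sub>m m"
  shows "\<exists>U D. U \<in> carrier_mat (Suc m) (Suc m) \<and> D \<in> carrier_mat (Suc m) (Suc m)
           \<and> diagonal_mat D \<and> transpose_mat U * U = 1\<^sub>m (Suc m)
           \<and> four_block_mat (mat 1 1 (\<lambda>_. l)) (0\<^sub>m 1 m) (0\<^sub>m m 1) (U' * D' * transpose_mat U')
               = U * D * transpose_mat U"
proof (intro exI conjI)
  let ?L = "mat 1 1 (\<lambda>_. l)"
  let ?U = "four_block_mat (1\<^sub>m 1) (0\<^sub>m 1 m) (0\<^sub>m m 1) U'"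
  let ?D = "four_block_mat ?L (0\<^sub>m 1 m) (0\<^sub>m m 1) D'"
  have L: "?L \<in> carrier_mat 1 1" by simp
  show "?U \<in> carrier_mat (Suc m) (Suc m)"
    using four_block_carrier_mat[OF one_carrier_mat[of 1] U'D'(1)] by simp
  show "?D \<in> carrier_mat (Suc m) (Suc m)"
    using four_block_carrier_mat[OF L U'D'(2)] by simp
  show "diagonal_mat ?D" using U'D' unfolding diagonal_mat_def by auto
  have UT: "transpose_mat ?U = four_block_mat (1\<^sub>m 1) (0\<^sub>m 1 m) (0\<^sub>m m 1) (transpose_mat U')"
    using U'D' by (subst transpose_four_block_mat) auto
  show "transpose_mat ?U * ?U = 1\<^sub>m (Suc m)"
    unfolding UT using U'D' by (subst mult_four_block_mat[of _ 1 1 _ m _ m _ _ 1 _ m]) auto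
  have "?U * ?D = four_block_mat ?L (0\<^sub>m 1 m) (0\<^sub>m m 1) (U' * D')"
    using U'D' L by (subst mult_four_block_mat[of _ 1 1 _ m _ m _ _ 1 _ m]) auto
  also have "\<dots> * transpose_mat ?U = four_block_mat ?L (0\<^sub>m 1 m) (0\<^sub>m m 1) (U' * D' * transpose_mat U')"
    unfolding UT using U'D' L by (subst mult_four_block_mat[of _ 1 1 _ m _ m _ _ 1 _ m]) auto
  finally show "four_block_mat ?L (0\<^sub>m 1 m) (0\<^sub>m m 1) (U' * D' * transpose_mat U')
       = ?U * ?D * transpose_mat ?U" ..
qed

theorem real_symmetric_mat_diagonalization:
  fixes A :: "real mat"
  assumes "A \<in> carrier_mat n n" "transpose_mat A = A"
  shows "\<exists>U D. U \<in> carrier_mat n n \<and> D \<in> carrier_mat n n \<and> diagonal_mat D \<and>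
           transpose_mat U * U = 1\<^sub>m n \<and> A = U * D * transpose_mat U"
  using assms
proof (induction n arbitrary: A)
  case 0
  show ?case
    by (rule exI[of _ "1\<^sub>m 0"], rule exI[of _ A])
      (use 0 in \<open>auto intro!: eq_matI simp: diagonal_mat_def\<close>)
next
  case (Suc m A)
  let ?n = "Suc m"
  have A: "A \<in> carrier_mat ?n ?n" using Suc.prems by auto
  obtain H l A' where H: "H \<in> carrier_mat ?n ?n" "transpose_mat H = H" "H * H = 1\<^sub>m ?n"
      and A': "A' \<in> carrier_mat m m" "transpose_mat A' = A'"
      and HAH: "H * A * H = four_block_mat (mat 1 1 (\<lambda>_. l)) (0\<^sub>m 1 m) (0\<^sub>m m 1) A'"
    using real_symmetric_mat_deflation[OF Suc.prems] by blast
  obtain U' D' where U'D': "U' \<in> carrier_mat m m" "D' \<in> carrier_mat m m" "diagonal_mat D'"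
      "transpose_mat U' * U' = 1\<^sub>m m" and A'_eq: "A' = U' * D' * transpose_mat U'"
    using Suc.IH[OF A'] by auto
  obtain U D where U: "U \<in> carrier_mat ?n ?n" "D \<in> carrier_mat ?n ?n" "diagonal_mat D"
      "transpose_mat U * U = 1\<^sub>m ?n" and HAH_eq: "H * A * H = U * D * transpose_mat U"
    using diagonalization_four_block[OF U'D', of l] HAH A'_eq by metis
  have HHX: "H * (H * X) = X" if "X \<in> carrier_mat ?n nc" for X nc
  proof -
    have "H * (H * X) = (H * H) * X" by (rule assoc_mult_mat[symmetric]) (use H that in auto)
    thus ?thesis using H that by simp
  qed
  show ?case
  proof (intro exI conjI)
    show "H * U \<in> carrier_mat ?n ?n" using H U by simp
    show "transpose_mat (H * U) * (H * U) = 1\<^sub>m ?n"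
      using H U HHX[OF U(1)]
      by (simp add: transpose_mult[of _ ?n ?n] assoc_mult_mat[of _ ?n ?n _ ?n _ ?n])
    have "H * U * D * transpose_mat (H * U) = H * (U * D * transpose_mat U) * H"
      using H U by (simp add: transpose_mult[of _ ?n ?n] assoc_mult_mat[of _ ?n ?n _ ?n _ ?n])
    also have "\<dots> = A" using H A HHX[OF A] by (simp add: HAH_eq[symmetric] assoc_mult_mat[of _ ?n ?n _ ?n _ ?n])
    finally show "A = H * U * D * transpose_mat (H * U)" by simp
  qed (use U in auto)
qed

lemma homogeneous_system_nontrivial_solution:
  fixes a :: "'i \<Rightarrow> 'j \<Rightarrow> real"
  assumes "finite E" "finite K" "card E < card K"
  shows "\<exists>c. (\<exists>j\<in>K. c j \<noteq> 0) \<and> (\<forall>i\<in>E. (\<Sum>j\<in>K. a i j * c j) = 0)"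
  using assms
proof (induction E arbitrary: K a rule: finite_induct)
  case empty
  then obtain j where "j \<in> K" by (metis card.empty card_gt_0_iff equals0I)
  thus ?case by (intro exI[of _ "\<lambda>_. 1"]) auto
next
  case (insert e E K a)
  have cE: "card E < card K" using insert by simp
  show ?case
  proof (cases "\<forall>j\<in>K. a e j = 0")
    case True
    then show ?thesis using insert.IH[OF insert.prems(1) cE, of a] by auto
  next
    case False
    then obtain j0 where j0: "j0 \<in> K" "a e j0 \<noteq> 0" by auto
    txt \<open>Eliminate the unknown \<open>c j0\<close> using equation \<open>e\<close>, and solve the rest recursively.\<close>
    define K' where "K' = K - {j0}"
    have fK': "finite K'" and cK': "card E < card K'"
      using insert.prems insert.hyps j0 by (auto simp: K'_def)
    define a' where "a' i j = a i j - a i j0 * a e j / a e j0" for i j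
    obtain c' where c': "\<exists>j\<in>K'. c' j \<noteq> 0" "\<forall>i\<in>E. (\<Sum>j\<in>K'. a' i j * c' j) = 0"
      using insert.IH[OF fK' cK'] by blast
    define S where "S = (\<Sum>j\<in>K'. a e j * c' j)"
    define c where "c j = (if j = j0 then - S / a e j0 else c' j)" for j
    have split: "(\<Sum>j\<in>K. a i j * c j) = a i j0 * c j0 + (\<Sum>j\<in>K'. a i j * c' j)" for i
    proof -
      have "(\<Sum>j\<in>K'. a i j * c j) = (\<Sum>j\<in>K'. a i j * c' j)"
        by (rule sum.cong) (auto simp: c_def K'_def)
      thus ?thesis unfolding K'_def using j0 insert.prems by (simp add: sum.remove)
    qed
    have "(\<Sum>j\<in>K. a i j * c j) = 0" if "i \<in> E" for i
    proof -
      have "0 = (\<Sum>j\<in>K'. a' i j * c' j)" using c'(2) that by simp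
      also have "\<dots> = (\<Sum>j\<in>K'. a i j * c' j) - (a i j0 / a e j0) * S"
        unfolding a'_def S_def by (simp add: sum_subtractf sum_distrib_left algebra_simps)
      finally have "(\<Sum>j\<in>K'. a i j * c' j) = (a i j0 / a e j0) * S" by simp
      thus ?thesis unfolding split by (simp add: c_def)
    qed
    moreover have "(\<Sum>j\<in>K. a e j * c j) = 0"
      unfolding split S_def[symmetric] using j0 by (simp add: c_def)
    moreover have "\<exists>j\<in>K. c j \<noteq> 0" using c' by (auto simp: c_def K'_def)
    ultimately show ?thesis by (intro exI[of _ c]) auto
  qed
qed

lemma proots_prod_linear_factors: "proots (\<Prod>a\<leftarrow>as. [:- a, 1:]) = mset (as :: real list)"
proof (induction as)
  case (Cons a as)
  have "(\<Prod>a\<leftarrow>as. [:- a, 1:]) \<noteq> (0 :: real poly)" by (auto simp: prod_list_zero_iff)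
  hence "proots ([:- a, 1:] * (\<Prod>a\<leftarrow>as. [:- a, 1:])) = proots [:- a, 1:] + mset as"
    using Cons by (subst proots_mult) auto
  thus ?case using proots_linear_factor[of "- a"] by simp
qed simp
lemma card_less_sorted_nth:
  fixes s :: "'a :: linorder list"
  assumes "sorted s" "1 \<le> k" "k \<le> length s"
  shows "card {i. i < length s \<and> s ! i < s ! (k - 1)} < k"
proof -
  have "{i. i < length s \<and> s ! i < s ! (k - 1)} \<subseteq> {..<k - 1}"
    using sorted_nth_mono[OF assms(1), of "k - 1"] by (auto simp: not_less) (meson leI leD)
  hence "card {i. i < length s \<and> s ! i < s ! (k - 1)} \<le> k - 1"
    by (metis card_lessThan card_mono finite_lessThan)
  thus ?thesis using assms by linarith
qed

lemma card_less_sorted_map_nth: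
  fixes d :: "nat \<Rightarrow> 'a :: linorder"
  assumes "1 \<le> k" "k \<le> n"
  shows "card {i \<in> {0..<n}. d i < sort (map d [0..<n]) ! (k - 1)} < k"
proof -
  let ?s = "sort (map d [0..<n])" and ?P = "\<lambda>x. x < sort (map d [0..<n]) ! (k - 1)"
  have "card {i \<in> {0..<n}. ?P (d i)} = length (filter ?P (map d [0..<n]))"
    unfolding length_filter_conv_card by (intro arg_cong[where f = card]) auto
  also have "\<dots> = length (filter ?P ?s)" by (metis mset_filter mset_sort size_mset)
  also have "\<dots> < k"
    using card_less_sorted_nth[of ?s k] assms unfolding length_filter_conv_card by simp
  finally show ?thesis .
qed

lemma orthogonal_diagonalization_quadratic_form:
  fixes U D :: "real mat"
  assumes UD: "U \<in> carrier_mat n n" "D \<in> carrier_mat n n" "diagonal_mat D"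
    and A: "A = U * D * transpose_mat U"
  shows "(\<Sum>p=0..<n. \<Sum>q=0..<n. A $$ (p, q) * y p * y q)
       = (\<Sum>i=0..<n. D $$ (i, i) * (\<Sum>p=0..<n. U $$ (p, i) * y p)\<^sup>2)"
proof -
  have UD_index: "(U * D) $$ (p, l) = U $$ (p, l) * D $$ (l, l)" if "p < n" "l < n" for p l
  proof -
    have "(U * D) $$ (p, l) = (\<Sum>i=0..<n. U $$ (p, i) * D $$ (i, l))"
      using UD that by (simp add: scalar_prod_def)
    also have "\<dots> = (\<Sum>i=0..<n. if i = l then U $$ (p, l) * D $$ (l, l) else 0)"
      using UD(2,3) that by (intro sum.cong refl) (auto simp: diagonal_mat_def)
    finally show ?thesis using that by simp
  qed
  have A_index: "A $$ (p, q) = (\<Sum>i=0..<n. U $$ (p, i) * D $$ (i, i) * U $$ (q, i))"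
    if "p < n" "q < n" for p q
  proof -
    have "A $$ (p, q) = (\<Sum>l=0..<n. (U * D) $$ (p, l) * transpose_mat U $$ (l, q))"
      using UD that by (simp add: A scalar_prod_def del: assoc_mult_mat)
    also have "\<dots> = (\<Sum>i=0..<n. U $$ (p, i) * D $$ (i, i) * U $$ (q, i))"
      using UD that by (intro sum.cong refl, subst UD_index) auto
    finally show ?thesis .
  qed
  have "(\<Sum>i=0..<n. D $$ (i, i) * (\<Sum>p=0..<n. U $$ (p, i) * y p)\<^sup>2)
      = (\<Sum>i=0..<n. \<Sum>p=0..<n. \<Sum>q=0..<n. U $$ (p, i) * D $$ (i, i) * U $$ (q, i) * y p * y q)"
    by (simp add: power2_eq_square sum_product sum_distrib_left mult_ac)
  also have "\<dots> = (\<Sum>p=0..<n. \<Sum>q=0..<n. \<Sum>i=0..<n. U $$ (p, i) * D $$ (i, i) * U $$ (q, i) * y p * y q)"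
    by (subst sum.swap) (rule sum.cong[OF refl], rule sum.swap)
  also have "\<dots> = (\<Sum>p=0..<n. \<Sum>q=0..<n. A $$ (p, q) * y p * y q)"
    by (simp add: A_index sum_distrib_right)
  finally show ?thesis ..
qed

lemma orthogonal_mat_sum_power2:
  fixes U :: "real mat"
  assumes U: "U \<in> carrier_mat n n" "transpose_mat U * U = 1\<^sub>m n"
  shows "(\<Sum>p=0..<n. (y p)\<^sup>2) = (\<Sum>i=0..<n. (\<Sum>p=0..<n. U $$ (p, i) * y p)\<^sup>2)"
proof -
  have I: "1\<^sub>m n = U * 1\<^sub>m n * transpose_mat U"
    using mat_mult_left_right_inverse[OF _ U(1) U(2)] U(1) by simp
  have "(\<Sum>p=0..<n. (y p)\<^sup>2) = (\<Sum>p=0..<n. \<Sum>q=0..<n. 1\<^sub>m n $$ (p, q) * y p * y q)"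
    by (simp add: power2_eq_square if_distrib[of "\<lambda>x. x * _"] cong: if_cong)
  also have "\<dots> = (\<Sum>i=0..<n. 1\<^sub>m n $$ (i, i) * (\<Sum>p=0..<n. U $$ (p, i) * y p)\<^sup>2)"
    by (rule orthogonal_diagonalization_quadratic_form[OF U(1) one_carrier_mat _ I])
      (simp add: diagonal_mat_def)
  also have "\<dots> = (\<Sum>i=0..<n. (\<Sum>p=0..<n. U $$ (p, i) * y p)\<^sup>2)" by simp
  finally show ?thesis .
qed

lemma sorted_eigenvalues_orthogonal_diagonalization:
  fixes U D :: "real mat"
  assumes A: "A \<in> carrier_mat n n"
    and UD: "U \<in> carrier_mat n n" "D \<in> carrier_mat n n" "diagonal_mat D"
      "transpose_mat U * U = 1\<^sub>m n" "A = U * D * transpose_mat U"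
  shows "sorted_list_of_multiset (proots (char_poly A)) = sort (map (\<lambda>i. D $$ (i, i)) [0..<n])"
proof -
  have "U * transpose_mat U = 1\<^sub>m n"
    using mat_mult_left_right_inverse[OF _ UD(1) UD(4)] UD(1) by simp
  have "similar_mat A D"
    unfolding similar_mat_def similar_mat_wit_def
    by (rule exI[of _ U], rule exI[of _ "transpose_mat U"])
      (use A UD \<open>U * transpose_mat U = 1\<^sub>m n\<close> in \<open>auto simp: Let_def\<close>)
  hence "char_poly A = char_poly D" by (rule char_poly_similar)
  also have "\<dots> = (\<Prod>a\<leftarrow>diag_mat D. [:- a, 1:])"
    using UD(2,3) by (intro char_poly_upper_triangular)
      (auto simp: upper_triangular_def diagonal_mat_def)
  also have "diag_mat D = map (\<lambda>i. D $$ (i, i)) [0..<n]" using UD(2) by (simp add: diag_mat_def)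
  finally show ?thesis
    by (simp only: proots_prod_linear_factors sorted_list_of_multiset_mset)
qed

theorem courant_fischer_lower_bound:
  fixes A :: "real mat" and x :: "'j \<Rightarrow> nat \<Rightarrow> real"
  assumes A: "A \<in> carrier_mat n n" and sym: "transpose_mat A = A" and k: "1 \<le> k" "k \<le> n"
    and K: "finite K" "k \<le> card K"
  shows "\<exists>c. (\<exists>j\<in>K. c j \<noteq> 0) \<and>
     sorted_list_of_multiset (proots (char_poly A)) ! (k - 1) * (\<Sum>p=0..<n. (\<Sum>j\<in>K. c j * x j p)\<^sup>2)
     \<le> (\<Sum>p=0..<n. \<Sum>q=0..<n. A $$ (p, q) * (\<Sum>j\<in>K. c j * x j p) * (\<Sum>j\<in>K. c j * x j q))"
proof -
  obtain U D where UD: "U \<in> carrier_mat n n" "D \<in> carrier_mat n n" "diagonal_mat D"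
     "transpose_mat U * U = 1\<^sub>m n" "A = U * D * transpose_mat U"
    using real_symmetric_mat_diagonalization[OF A sym] by auto
  define d where "d i = D $$ (i, i)" for i
  define s where "s = sort (map d [0..<n])"
  have s: "sorted_list_of_multiset (proots (char_poly A)) = s"
    unfolding s_def d_def by (rule sorted_eigenvalues_orthogonal_diagonalization[OF A UD])
  define mu where "mu = s ! (k - 1)"
  txt \<open>The coordinates along eigenvalues below \<open>mu\<close> are fewer than \<open>k\<close> linear conditions on \<open>c\<close>.\<close>
  define J where "J = {i \<in> {0..<n}. d i < mu}"
  have "card J < k" unfolding J_def mu_def s_def by (rule card_less_sorted_map_nth[OF k])
  with K obtain c where c: "\<exists>j\<in>K. c j \<noteq> 0"
      "\<forall>i\<in>J. (\<Sum>j\<in>K. (\<Sum>p=0..<n. U $$ (p, i) * x j p) * c j) = 0"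
    using homogeneous_system_nontrivial_solution[of J K "\<lambda>i j. \<Sum>p=0..<n. U $$ (p, i) * x j p"]
    unfolding J_def by force
  define y where "y p = (\<Sum>j\<in>K. c j * x j p)" for p
  define z where "z i = (\<Sum>p=0..<n. U $$ (p, i) * y p)" for i
  have zJ: "z i = 0" if "i \<in> J" for i
  proof -
    have "z i = (\<Sum>p=0..<n. \<Sum>j\<in>K. U $$ (p, i) * x j p * c j)"
      unfolding z_def y_def by (simp add: sum_distrib_left mult_ac)
    also have "\<dots> = (\<Sum>j\<in>K. (\<Sum>p=0..<n. U $$ (p, i) * x j p) * c j)"
      by (subst sum.swap) (simp add: sum_distrib_right)
    also have "\<dots> = 0" using c(2) that by simp
    finally show ?thesis .
  qed
  have "(\<Sum>p=0..<n. y p ^ 2) = (\<Sum>i=0..<n. z i ^ 2)"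
    unfolding z_def by (rule orthogonal_mat_sum_power2[OF UD(1,4)])
  hence "mu * (\<Sum>p=0..<n. y p ^ 2) = (\<Sum>i=0..<n. mu * z i ^ 2)"
    by (simp add: sum_distrib_left)
  also have "\<dots> \<le> (\<Sum>i=0..<n. d i * z i ^ 2)"
    using zJ by (intro sum_mono) (fastforce simp: J_def intro: mult_right_mono)
  also have "\<dots> = (\<Sum>p=0..<n. \<Sum>q=0..<n. A $$ (p, q) * y p * y q)"
    unfolding z_def d_def by (rule orthogonal_diagonalization_quadratic_form[OF UD(1-3,5), symmetric])
  finally show ?thesis using c(1) unfolding s mu_def y_def by auto
qed

definition dirichlet_energy :: "nat \<Rightarrow> (nat \<Rightarrow> nat \<Rightarrow> real) \<Rightarrow> (nat \<Rightarrow> real) \<Rightarrow> real" where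
  "dirichlet_energy n w f = (\<Sum>u<n. \<Sum>v<n. w u v * (f u - f v)\<^sup>2) / 2"

lemma rayleigh_eq_dirichlet_energy: "rayleigh n w f = dirichlet_energy n w f / wnorm2 n w f"
  unfolding rayleigh_def dirichlet_energy_def ..

lemma dirichlet_energy_nonneg:
  assumes "\<forall>u<n. \<forall>v<n. 0 \<le> w u v"
  shows "0 \<le> dirichlet_energy n w f"
  unfolding dirichlet_energy_def using assms by (auto intro!: sum_nonneg)

lemma dirichlet_energy_eq:
  assumes sym: "\<forall>u<n. \<forall>v<n. w u v = w v u"
  shows "dirichlet_energy n w f = wnorm2 n w f - (\<Sum>p<n. \<Sum>q<n. w p q * f p * f q)"
proof -
  have a: "(\<Sum>u<n. \<Sum>v<n. w u v * f u ^ 2) = wnorm2 n w f"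
    unfolding wnorm2_def wdeg_def by (simp add: sum_distrib_right)
  have "(\<Sum>u<n. \<Sum>v<n. w u v * f v ^ 2) = (\<Sum>v<n. \<Sum>u<n. w u v * f v ^ 2)" by (rule sum.swap)
  also have "\<dots> = (\<Sum>v<n. \<Sum>u<n. w v u * f v ^ 2)" using sym by (intro sum.cong refl) auto
  finally have b: "(\<Sum>u<n. \<Sum>v<n. w u v * f v ^ 2) = wnorm2 n w f" using a by simp
  have "(\<Sum>u<n. \<Sum>v<n. w u v * (f u - f v)\<^sup>2)
      = (\<Sum>u<n. \<Sum>v<n. w u v * f u ^ 2) + (\<Sum>u<n. \<Sum>v<n. w u v * f v ^ 2)
        - 2 * (\<Sum>u<n. \<Sum>v<n. w u v * f u * f v)"
    by (simp add: power2_diff sum.distrib sum_subtractf sum_distrib_left algebra_simps)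
  thus ?thesis unfolding dirichlet_energy_def a b by simp
qed

lemma norm_laplacian_carrier: "norm_laplacian n w \<in> carrier_mat n n"
  by (simp add: norm_laplacian_def)

lemma norm_laplacian_symmetric:
  assumes "\<forall>u<n. \<forall>v<n. w u v = w v u"
  shows "transpose_mat (norm_laplacian n w) = norm_laplacian n w"
  by (rule eq_matI) (use assms in \<open>auto simp: norm_laplacian_def mult.commute\<close>)

lemma norm_laplacian_quadratic_form:
  assumes sym: "\<forall>u<n. \<forall>v<n. w u v = w v u" and deg: "\<forall>v<n. 0 < wdeg n w v"
  shows "(\<Sum>p=0..<n. \<Sum>q=0..<n. norm_laplacian n w $$ (p, q)
            * (sqrt (wdeg n w p) * f p) * (sqrt (wdeg n w q) * f q))
         = dirichlet_energy n w f"
proof -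
  have entry: "norm_laplacian n w $$ (p, q) * (sqrt (wdeg n w p) * f p) * (sqrt (wdeg n w q) * f q)
      = (if p = q then wdeg n w p * f p ^ 2 else 0) - w p q * f p * f q" if "p < n" "q < n" for p q
  proof -
    let ?s = "sqrt (wdeg n w p) * sqrt (wdeg n w q)"
    have dp: "wdeg n w p > 0" "wdeg n w q > 0" using deg that by auto
    have "norm_laplacian n w $$ (p, q) * (sqrt (wdeg n w p) * f p) * (sqrt (wdeg n w q) * f q)
       = (if p = q then ?s else 0) * (f p * f q)
         - w p q * (?s / sqrt (wdeg n w p * wdeg n w q)) * (f p * f q)"
      using that by (simp add: norm_laplacian_def algebra_simps)
    also have "?s / sqrt (wdeg n w p * wdeg n w q) = 1" using dp by (simp add: real_sqrt_mult)
    finally show ?thesis using dp by (auto simp: power2_eq_square)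
  qed
  have "(\<Sum>p=0..<n. \<Sum>q=0..<n. norm_laplacian n w $$ (p, q)
            * (sqrt (wdeg n w p) * f p) * (sqrt (wdeg n w q) * f q))
      = (\<Sum>p=0..<n. \<Sum>q=0..<n. (if p = q then wdeg n w p * f p ^ 2 else 0) - w p q * f p * f q)"
    by (intro sum.cong refl) (simp add: entry)
  also have "\<dots> = wnorm2 n w f - (\<Sum>p<n. \<Sum>q<n. w p q * f p * f q)"
    by (simp add: sum_subtractf atLeast0LessThan wnorm2_def)
  finally show ?thesis using dirichlet_energy_eq[OF sym] by simp
qed

lemma wnorm2_eq_sum_sqrt:
  assumes "\<forall>v<n. 0 \<le> wdeg n w v"
  shows "(\<Sum>p=0..<n. (sqrt (wdeg n w p) * f p)\<^sup>2) = wnorm2 n w f"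
  unfolding wnorm2_def atLeast0LessThan
  by (intro sum.cong refl) (use assms in \<open>auto simp: power_mult_distrib\<close>)

lemma courant_fischer_rayleigh:
  fixes \<phi> :: "'j \<Rightarrow> nat \<Rightarrow> real"
  assumes sym: "\<forall>u<n. \<forall>v<n. w u v = w v u" and deg: "\<forall>v<n. 0 < wdeg n w v"
    and k: "1 \<le> k" "k \<le> n" and K: "finite K" "k \<le> card K"
  shows "\<exists>c. (\<exists>j\<in>K. c j \<noteq> 0) \<and>
           lap_eig n w k * wnorm2 n w (\<lambda>v. \<Sum>j\<in>K. c j * \<phi> j v)
             \<le> dirichlet_energy n w (\<lambda>v. \<Sum>j\<in>K. c j * \<phi> j v)"
proof -
  obtain c where c: "\<exists>j\<in>K. c j \<noteq> 0" and ineq: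
    "lap_eig n w k * (\<Sum>p=0..<n. (\<Sum>j\<in>K. c j * (sqrt (wdeg n w p) * \<phi> j p))\<^sup>2)
     \<le> (\<Sum>p=0..<n. \<Sum>q=0..<n. norm_laplacian n w $$ (p, q)
          * (\<Sum>j\<in>K. c j * (sqrt (wdeg n w p) * \<phi> j p))
          * (\<Sum>j\<in>K. c j * (sqrt (wdeg n w q) * \<phi> j q)))"
    using courant_fischer_lower_bound[OF norm_laplacian_carrier norm_laplacian_symmetric[OF sym] k K,
        where x = "\<lambda>j p. sqrt (wdeg n w p) * \<phi> j p"]
    unfolding lap_eig_def by blast
  define \<psi> where "\<psi> = (\<lambda>v. \<Sum>j\<in>K. c j * \<phi> j v)"
  have rw: "(\<Sum>j\<in>K. c j * (sqrt (wdeg n w p) * \<phi> j p)) = sqrt (wdeg n w p) * \<psi> p" for p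
    unfolding \<psi>_def by (simp add: sum_distrib_left mult_ac)
  have deg': "\<forall>v<n. 0 \<le> wdeg n w v" using deg by (simp add: less_imp_le)
  have "lap_eig n w k * wnorm2 n w \<psi> \<le> dirichlet_energy n w \<psi>"
    using ineq unfolding rw wnorm2_eq_sum_sqrt[OF deg'] norm_laplacian_quadratic_form[OF sym deg] .
  with c show ?thesis unfolding \<psi>_def by blast
qed

definition disjointly_supported :: "nat \<Rightarrow> 'j set \<Rightarrow> ('j \<Rightarrow> nat \<Rightarrow> real) \<Rightarrow> bool" where
  "disjointly_supported n K \<phi> \<longleftrightarrow>
     (\<forall>v<n. \<forall>j\<in>K. \<forall>j'\<in>K. j \<noteq> j' \<longrightarrow> \<phi> j v = 0 \<or> \<phi> j' v = 0)"

lemma sum_eq_single_support: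
  fixes g :: "'i \<Rightarrow> 'a :: comm_monoid_add"
  assumes "finite K" "j \<in> K" "\<forall>i\<in>K. i \<noteq> j \<longrightarrow> g i = 0"
  shows "sum g K = g j"
  using sum.mono_neutral_right[of K "{j}" g] assms by auto

lemma power2_sum_single_support:
  fixes a c :: "'j \<Rightarrow> real"
  assumes K: "finite K" and a: "\<forall>j\<in>K. \<forall>j'\<in>K. j \<noteq> j' \<longrightarrow> a j = 0 \<or> a j' = 0"
  shows "(\<Sum>j\<in>K. c j * a j)\<^sup>2 = (\<Sum>j\<in>K. (c j)\<^sup>2 * (a j)\<^sup>2)"
proof (cases "\<exists>j\<in>K. a j \<noteq> 0")
  case True
  then obtain j where j: "j \<in> K" "a j \<noteq> 0" by auto
  hence "\<forall>i\<in>K. i \<noteq> j \<longrightarrow> a i = 0" using a by metis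
  thus ?thesis
    using sum_eq_single_support[OF K j(1), of "\<lambda>j. c j * a j"]
      sum_eq_single_support[OF K j(1), of "\<lambda>j. (c j)\<^sup>2 * (a j)\<^sup>2"]
    by (simp add: power_mult_distrib)
qed simp

lemma power2_diff_sum_single_support_le:
  fixes a b c :: "'j \<Rightarrow> real"
  assumes K: "finite K"
    and a: "\<forall>j\<in>K. \<forall>j'\<in>K. j \<noteq> j' \<longrightarrow> a j = 0 \<or> a j' = 0"
    and b: "\<forall>j\<in>K. \<forall>j'\<in>K. j \<noteq> j' \<longrightarrow> b j = 0 \<or> b j' = 0"
  shows "((\<Sum>j\<in>K. c j * a j) - (\<Sum>j\<in>K. c j * b j))\<^sup>2 \<le> 2 * (\<Sum>j\<in>K. (c j)\<^sup>2 * (a j - b j)\<^sup>2)"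
proof (cases "\<exists>j\<in>K. a j \<noteq> 0 \<and> b j \<noteq> 0")
  case True
  txt \<open>Both supports sit at the same index, so both sums reduce to that single term.\<close>
  then obtain j where j: "j \<in> K" "a j \<noteq> 0" "b j \<noteq> 0" by auto
  have "\<forall>i\<in>K. i \<noteq> j \<longrightarrow> c i * a i = 0" "\<forall>i\<in>K. i \<noteq> j \<longrightarrow> c i * b i = 0"
    using a b j by (metis mult_zero_right)+
  hence "((\<Sum>j\<in>K. c j * a j) - (\<Sum>j\<in>K. c j * b j))\<^sup>2 = (c j * a j - c j * b j)\<^sup>2"
    using sum_eq_single_support[OF K j(1), of "\<lambda>j. c j * a j"]
      sum_eq_single_support[OF K j(1), of "\<lambda>j. c j * b j"] by simp
  also have "\<dots> = (c j)\<^sup>2 * (a j - b j)\<^sup>2" by (simp add: power_mult_distrib flip: right_diff_distrib)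
  also have "\<dots> \<le> (\<Sum>j\<in>K. (c j)\<^sup>2 * (a j - b j)\<^sup>2)"
    by (rule member_le_sum[OF j(1)]) (auto simp: K)
  finally show ?thesis by (smt (verit) sum_nonneg zero_le_mult_iff zero_le_power2)
next
  case False
  txt \<open>Otherwise the cross terms \<open>a j b j\<close> all vanish.\<close>
  have "((\<Sum>j\<in>K. c j * a j) - (\<Sum>j\<in>K. c j * b j))\<^sup>2
      \<le> 2 * ((\<Sum>j\<in>K. c j * a j)\<^sup>2 + (\<Sum>j\<in>K. c j * b j)\<^sup>2)"
    by (smt (verit) power2_diff zero_le_power2 power2_sum)
  also have "\<dots> = 2 * (\<Sum>j\<in>K. (c j)\<^sup>2 * (a j)\<^sup>2 + (c j)\<^sup>2 * (b j)\<^sup>2)"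
    by (simp add: power2_sum_single_support[OF K a] power2_sum_single_support[OF K b] sum.distrib)
  also have "\<dots> = 2 * (\<Sum>j\<in>K. (c j)\<^sup>2 * (a j - b j)\<^sup>2)"
    using False by (intro arg_cong[where f = "(*) 2"] sum.cong refl)
      (auto simp: power2_diff algebra_simps)
  finally show ?thesis .
qed

lemma wnorm2_disjoint_combination:
  assumes "finite K" "disjointly_supported n K \<phi>"
  shows "wnorm2 n w (\<lambda>v. \<Sum>j\<in>K. c j * \<phi> j v) = (\<Sum>j\<in>K. (c j)\<^sup>2 * wnorm2 n w (\<phi> j))"
proof -
  have "wnorm2 n w (\<lambda>v. \<Sum>j\<in>K. c j * \<phi> j v) = (\<Sum>v<n. wdeg n w v * (\<Sum>j\<in>K. (c j)\<^sup>2 * (\<phi> j v)\<^sup>2))"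
    unfolding wnorm2_def using assms
    by (intro sum.cong refl) (simp add: disjointly_supported_def power2_sum_single_support)
  also have "\<dots> = (\<Sum>j\<in>K. (c j)\<^sup>2 * wnorm2 n w (\<phi> j))"
    unfolding wnorm2_def by (simp add: sum_distrib_left sum.swap[of _ "{..<n}"] mult_ac)
  finally show ?thesis .
qed

lemma dirichlet_energy_disjoint_combination_le:
  assumes w_nonneg: "\<forall>u<n. \<forall>v<n. 0 \<le> w u v" and K: "finite K"
    and disj: "disjointly_supported n K \<phi>"
  shows "dirichlet_energy n w (\<lambda>v. \<Sum>j\<in>K. c j * \<phi> j v)
           \<le> 2 * (\<Sum>j\<in>K. (c j)\<^sup>2 * dirichlet_energy n w (\<phi> j))"
proof -
  have "2 * dirichlet_energy n w (\<lambda>v. \<Sum>j\<in>K. c j * \<phi> j v)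
      = (\<Sum>u<n. \<Sum>v<n. w u v * ((\<Sum>j\<in>K. c j * \<phi> j u) - (\<Sum>j\<in>K. c j * \<phi> j v))\<^sup>2)"
    by (simp add: dirichlet_energy_def)
  also have "\<dots> \<le> (\<Sum>u<n. \<Sum>v<n. w u v * (2 * (\<Sum>j\<in>K. (c j)\<^sup>2 * (\<phi> j u - \<phi> j v)\<^sup>2)))"
    using w_nonneg disj unfolding disjointly_supported_def
    by (intro sum_mono mult_left_mono power2_diff_sum_single_support_le[OF K]) auto
  also have "\<dots> = 2 * (\<Sum>j\<in>K. (c j)\<^sup>2 * (\<Sum>u<n. \<Sum>v<n. w u v * (\<phi> j u - \<phi> j v)\<^sup>2))"
    by (simp add: sum_distrib_left sum.swap[of _ K] mult_ac)
  also have "\<dots> = 2 * (\<Sum>j\<in>K. 2 * ((c j)\<^sup>2 * dirichlet_energy n w (\<phi> j)))"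
    by (intro arg_cong[where f = "(*) 2"] sum.cong refl) (simp add: dirichlet_energy_def)
  finally show ?thesis by (simp add: sum_distrib_left[symmetric])
qed

theorem disjointly_supported_energy_ge:
  fixes \<phi> :: "'j \<Rightarrow> nat \<Rightarrow> real"
  assumes w_nonneg: "\<forall>u<n. \<forall>v<n. 0 \<le> w u v" and sym: "\<forall>u<n. \<forall>v<n. w u v = w v u"
    and deg: "\<forall>v<n. 0 < wdeg n w v" and k: "1 \<le> k" "k \<le> n"
    and K: "finite K" "k \<le> card K" and disj: "disjointly_supported n K \<phi>"
  shows "\<exists>j\<in>K. lap_eig n w k * wnorm2 n w (\<phi> j) \<le> 2 * dirichlet_energy n w (\<phi> j)"
proof (rule ccontr)
  assume "\<not> ?thesis"
  hence small: "2 * dirichlet_energy n w (\<phi> j) < lap_eig n w k * wnorm2 n w (\<phi> j)" if "j \<in> K" for j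
    using that by auto
  obtain c where c: "\<exists>j\<in>K. c j \<noteq> 0" and ray:
    "lap_eig n w k * wnorm2 n w (\<lambda>v. \<Sum>j\<in>K. c j * \<phi> j v)
       \<le> dirichlet_energy n w (\<lambda>v. \<Sum>j\<in>K. c j * \<phi> j v)"
    using courant_fischer_rayleigh[OF sym deg k K, of \<phi>] by blast
  have "dirichlet_energy n w (\<lambda>v. \<Sum>j\<in>K. c j * \<phi> j v)
      \<le> (\<Sum>j\<in>K. (c j)\<^sup>2 * (2 * dirichlet_energy n w (\<phi> j)))"
    using dirichlet_energy_disjoint_combination_le[OF w_nonneg K(1) disj, of c]
    by (simp add: sum_distrib_left mult_ac)
  also have "\<dots> < (\<Sum>j\<in>K. (c j)\<^sup>2 * (lap_eig n w k * wnorm2 n w (\<phi> j)))"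
  proof (rule sum_strict_mono_ex1[OF K(1)])
    show "\<forall>j\<in>K. (c j)\<^sup>2 * (2 * dirichlet_energy n w (\<phi> j))
        \<le> (c j)\<^sup>2 * (lap_eig n w k * wnorm2 n w (\<phi> j))"
      using small by (meson less_imp_le mult_left_mono zero_le_power2)
    show "\<exists>j\<in>K. (c j)\<^sup>2 * (2 * dirichlet_energy n w (\<phi> j))
        < (c j)\<^sup>2 * (lap_eig n w k * wnorm2 n w (\<phi> j))"
      using c small by (metis mult_strict_left_mono zero_less_power2)
  qed
  also have "\<dots> = lap_eig n w k * wnorm2 n w (\<lambda>v. \<Sum>j\<in>K. c j * \<phi> j v)"
    by (simp add: wnorm2_disjoint_combination[OF K(1) disj] sum_distrib_left mult_ac)
  finally show False using ray by simp
qed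

definition tent :: "real \<Rightarrow> real \<Rightarrow> real \<Rightarrow> real" where
  "tent a b x = max 0 (min (x - a) (b - x))"

text \<open>The length of \<open>[a, b] \<inter> [min x y, max x y]\<close>.\<close>

definition overlap :: "real \<Rightarrow> real \<Rightarrow> real \<Rightarrow> real \<Rightarrow> real" where
  "overlap a b x y = max 0 (min (max x y) b - max (min x y) a)"

lemma tent_nonzero_imp: "tent a b x \<noteq> 0 \<Longrightarrow> a < x \<and> x < b"
  by (auto simp: tent_def max_def min_def split: if_splits)

lemma tent_eq_min: "a \<le> x \<Longrightarrow> x \<le> b \<Longrightarrow> tent a b x = min (x - a) (b - x)"
  by (simp add: tent_def)

lemma abs_tent_diff_le_overlap: "a \<le> b \<Longrightarrow> \<bar>tent a b x - tent a b y\<bar> \<le> overlap a b x y"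
  unfolding tent_def overlap_def by (auto simp: max_def min_def split: if_splits)

lemma overlap_split: "a \<le> b \<Longrightarrow> b \<le> c \<Longrightarrow> overlap a c x y = overlap a b x y + overlap b c x y"
  unfolding overlap_def by (auto simp: max_def min_def split: if_splits)

lemma overlap_le_abs_diff: "overlap a b x y \<le> \<bar>x - y\<bar>"
  unfolding overlap_def by (auto simp: max_def min_def split: if_splits)

lemma overlap_nonneg: "0 \<le> overlap a b x y"
  by (simp add: overlap_def)

lemma sum_overlap:
  assumes "\<And>i. t i \<le> t (Suc i)"
  shows "(\<Sum>i<m. overlap (t i) (t (Suc i)) x y) = overlap (t 0) (t m) x y"
proof (induction m)
  case 0 thus ?case by (simp add: overlap_def)
next
  case (Suc m)
  have "t 0 \<le> t m" using lift_Suc_mono_le[of t, OF assms] by simp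
  thus ?case using Suc overlap_split[of "t 0" "t m" "t (Suc m)" x y] assms by simp
qed

lemma sum_power2_le_power2_sum:
  fixes b :: "'a \<Rightarrow> real"
  assumes "\<And>i. i \<in> A \<Longrightarrow> 0 \<le> b i"
  shows "(\<Sum>i\<in>A. (b i)\<^sup>2) \<le> (\<Sum>i\<in>A. b i)\<^sup>2"
  using assms
proof (induction A rule: infinite_finite_induct)
  case (insert x F)
  have "0 \<le> b x * sum b F" using insert by (simp add: sum_nonneg)
  thus ?case using insert by (simp add: power2_sum)
qed simp_all

lemma sum_power2_tent_diff_le:
  assumes "\<And>i. t i \<le> t (Suc i)"
  shows "(\<Sum>i<m. (tent (t i) (t (Suc i)) x - tent (t i) (t (Suc i)) y)\<^sup>2) \<le> (x - y)\<^sup>2"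
proof -
  have "(\<Sum>i<m. (tent (t i) (t (Suc i)) x - tent (t i) (t (Suc i)) y)\<^sup>2)
      = (\<Sum>i<m. \<bar>tent (t i) (t (Suc i)) x - tent (t i) (t (Suc i)) y\<bar>\<^sup>2)" by simp
  also have "\<dots> \<le> (\<Sum>i<m. \<bar>tent (t i) (t (Suc i)) x - tent (t i) (t (Suc i)) y\<bar>)\<^sup>2"
    by (rule sum_power2_le_power2_sum) simp
  also have "\<dots> \<le> (\<Sum>i<m. overlap (t i) (t (Suc i)) x y)\<^sup>2"
    using assms by (intro power_mono sum_mono abs_tent_diff_le_overlap sum_nonneg) auto
  also have "\<dots> \<le> \<bar>x - y\<bar>\<^sup>2"
    unfolding sum_overlap[of t, OF assms] by (rule power_mono[OF overlap_le_abs_diff overlap_nonneg])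
  finally show ?thesis by simp
qed

lemma sum_dirichlet_energy_tents_le:
  assumes w_nonneg: "\<forall>u<n. \<forall>v<n. 0 \<le> w u v" and t: "\<And>i. t i \<le> t (Suc i)"
  shows "(\<Sum>i<m. dirichlet_energy n w (\<lambda>v. tent (t i) (t (Suc i)) (f v))) \<le> dirichlet_energy n w f"
proof -
  have "(\<Sum>i<m. dirichlet_energy n w (\<lambda>v. tent (t i) (t (Suc i)) (f v)))
      = (\<Sum>u<n. \<Sum>v<n. w u v * (\<Sum>i<m. (tent (t i) (t (Suc i)) (f u) - tent (t i) (t (Suc i)) (f v))\<^sup>2)) / 2"
    unfolding dirichlet_energy_def
    by (simp add: sum_divide_distrib[symmetric] sum_distrib_left sum.swap[of _ "{..<m}"])
  also have "\<dots> \<le> dirichlet_energy n w f"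
    unfolding dirichlet_energy_def using w_nonneg
    by (intro divide_right_mono sum_mono mult_left_mono sum_power2_tent_diff_le t) auto
  finally show ?thesis .
qed

lemma tents_disjointly_supported:
  assumes "\<And>i. t i \<le> t (Suc i)"
  shows "disjointly_supported n I (\<lambda>i v. tent (t i) (t (Suc i)) (f v))"
proof -
  have "tent (t i) (t (Suc i)) x = 0 \<or> tent (t i') (t (Suc i')) x = 0" if "i < i'" for i i' x
  proof (rule ccontr)
    assume "\<not> ?thesis"
    hence "x < t (Suc i)" "t i' < x" using tent_nonzero_imp by blast+
    moreover have "t (Suc i) \<le> t i'" using lift_Suc_mono_le[of t, OF assms, of "Suc i" i'] that by simp
    ultimately show False by simp
  qed
  thus ?thesis unfolding disjointly_supported_def by (metis linorder_neqE_nat)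
qed

lemma greedy_thresholds:
  fixes E :: "real \<Rightarrow> real \<Rightarrow> real"
  assumes C: "0 < C" and M: "0 \<le> M"
    and cont: "\<And>a. continuous_on {a..M} (E a)" and diag: "\<And>a. E a a = 0"
  shows "\<exists>t. t 0 = 0 \<and> (\<forall>i. t i \<le> t (Suc i) \<and> t (Suc i) \<le> M \<and> E (t i) (t (Suc i)) \<le> C
                 \<and> (t (Suc i) < M \<longrightarrow> E (t i) (t (Suc i)) = C))"
proof -
  txt \<open>From \<open>a\<close>, jump to \<open>M\<close> if the mass \<open>E a M\<close> is at most \<open>C\<close>; otherwise the intermediate value
    theorem gives a point of mass exactly \<open>C\<close>.\<close>
  have "\<exists>b. a \<le> b \<and> b \<le> M \<and> E a b \<le> C \<and> (b < M \<longrightarrow> E a b = C)" if aM: "a \<le> M" for a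
  proof (cases "E a M \<le> C")
    case False
    then obtain b where "a \<le> b" "b \<le> M" "E a b = C"
      using IVT'[of "E a" a C M] diag[of a] C aM cont by auto
    thus ?thesis by auto
  qed (use aM in auto)
  then obtain step where step: "\<And>a. a \<le> M \<Longrightarrow> a \<le> step a \<and> step a \<le> M \<and> E a (step a) \<le> C
      \<and> (step a < M \<longrightarrow> E a (step a) = C)"
    by metis
  define t where "t i = (step ^^ i) 0" for i
  have "t i \<le> M" for i by (induction i) (auto simp: t_def M step)
  thus ?thesis using step by (intro exI[of _ t]) (auto simp: t_def)
qed

lemma monotone_bracket:
  fixes t :: "nat \<Rightarrow> real"
  assumes "\<And>i. i < m \<Longrightarrow> t i \<le> t (Suc i)" "t 0 \<le> x" "x \<le> t m" "0 < m"
  shows "\<exists>i<m. t i \<le> x \<and> x \<le> t (Suc i)"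
  using assms
proof (induction m)
  case (Suc m)
  show ?case
  proof (cases "0 < m \<and> x \<le> t m")
    case True
    thus ?thesis using Suc by (metis less_SucI less_Suc_eq)
  next
    case False
    hence "t m \<le> x" using Suc.prems(2) by (cases "m = 0") auto
    thus ?thesis using Suc.prems(3) by auto
  qed
qed simp

lemma step_approx_error_le_tents:
  assumes deg: "\<forall>v<n. 0 \<le> wdeg n w v" and k: "1 \<le> k"
    and t: "\<forall>i<2 * k. t i \<le> t (Suc i)" and f: "\<forall>v<n. t 0 \<le> f v \<and> f v \<le> t (2 * k)"
    and g: "is_step_approx n k t f g"
  shows "wnorm2 n w (\<lambda>v. f v - g v)
           \<le> (\<Sum>i<2 * k. wnorm2 n w (\<lambda>v. tent (t i) (t (Suc i)) (f v)))"
proof -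
  have "(f v - g v)\<^sup>2 \<le> (\<Sum>i<2 * k. (tent (t i) (t (Suc i)) (f v))\<^sup>2)" if v: "v < n" for v
  proof -
    obtain i where i: "i < 2 * k" "t i \<le> f v" "f v \<le> t (Suc i)"
      using monotone_bracket[of "2 * k" t "f v"] t f v k by auto
    have "\<bar>f v - g v\<bar> \<le> \<bar>f v - t i\<bar>" "\<bar>f v - g v\<bar> \<le> \<bar>f v - t (Suc i)\<bar>"
      using g v i(1) unfolding is_step_approx_def by auto
    hence "\<bar>f v - g v\<bar> \<le> tent (t i) (t (Suc i)) (f v)" using i by (simp add: tent_eq_min)
    hence "(f v - g v)\<^sup>2 \<le> (tent (t i) (t (Suc i)) (f v))\<^sup>2"
      by (metis abs_ge_zero power2_abs power_mono)
    also have "\<dots> \<le> (\<Sum>i<2 * k. (tent (t i) (t (Suc i)) (f v))\<^sup>2)"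
      by (rule member_le_sum) (use i in auto)
    finally show ?thesis .
  qed
  hence "wnorm2 n w (\<lambda>v. f v - g v)
      \<le> (\<Sum>v<n. wdeg n w v * (\<Sum>i<2 * k. (tent (t i) (t (Suc i)) (f v))\<^sup>2))"
    unfolding wnorm2_def using deg by (intro sum_mono mult_left_mono) auto
  also have "\<dots> = (\<Sum>i<2 * k. wnorm2 n w (\<lambda>v. tent (t i) (t (Suc i)) (f v)))"
    unfolding wnorm2_def by (simp add: sum_distrib_left sum.swap[of _ "{..<n}"])
  finally show ?thesis .
qed

lemma card_ge_mult_le_sum:
  fixes a :: "'i \<Rightarrow> real" and c :: real
  assumes "finite I" "\<forall>i\<in>I. 0 \<le> a i"
  shows "real (card {i\<in>I. c \<le> a i}) * c \<le> sum a I"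
proof -
  have "real (card {i\<in>I. c \<le> a i}) * c = (\<Sum>i\<in>{i\<in>I. c \<le> a i}. c)" by simp
  also have "\<dots> \<le> (\<Sum>i\<in>{i\<in>I. c \<le> a i}. a i)" by (rule sum_mono) simp
  also have "\<dots> \<le> sum a I" using assms by (intro sum_mono2) auto
  finally show ?thesis .
qed

theorem exists_light_tent:
  assumes w_nonneg: "\<forall>u<n. \<forall>v<n. 0 \<le> w u v" and sym: "\<forall>u<n. \<forall>v<n. w u v = w v u"
    and deg: "\<forall>v<n. 0 < wdeg n w v" and k: "1 \<le> k" "k \<le> n"
    and t: "\<And>i. t i \<le> t (Suc i)" and R: "0 < dirichlet_energy n w f"
  shows "\<exists>i<2 * k. lap_eig n w k * wnorm2 n w (\<lambda>v. tent (t i) (t (Suc i)) (f v))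
                     < 2 * dirichlet_energy n w f / k"
proof -
  define c where "c = dirichlet_energy n w f / k"
  define \<phi> where "\<phi> i v = tent (t i) (t (Suc i)) (f v)" for i v
  define G where "G = {i\<in>{..<2 * k}. dirichlet_energy n w (\<phi> i) < c}"
  define B where "B = {i\<in>{..<2 * k}. c \<le> dirichlet_energy n w (\<phi> i)}"
  txt \<open>The tent energies sum to at most \<open>k c\<close>, so at most \<open>k\<close> of the \<open>2k\<close> tents are heavy.\<close>
  have "real (card B) * c \<le> dirichlet_energy n w f"
    using card_ge_mult_le_sum[of "{..<2 * k}" "\<lambda>i. dirichlet_energy n w (\<phi> i)" c]
      sum_dirichlet_energy_tents_le[where t = t and m = "2 * k" and f = f, OF w_nonneg t]
      dirichlet_energy_nonneg[OF w_nonneg]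
    unfolding B_def \<phi>_def by force
  hence "card B \<le> k" using R k by (simp add: c_def field_simps)
  moreover have "{..<2 * k} = G \<union> B" by (auto simp: G_def B_def)
  hence "2 * k \<le> card G + card B" using card_Un_le[of G B] by (metis card_lessThan)
  ultimately have "k \<le> card G" by linarith
  moreover have "disjointly_supported n G \<phi>"
    unfolding \<phi>_def by (rule tents_disjointly_supported[where t = t, OF t])
  ultimately obtain i where i: "i \<in> G"
      and "lap_eig n w k * wnorm2 n w (\<phi> i) \<le> 2 * dirichlet_energy n w (\<phi> i)"
    using disjointly_supported_energy_ge[OF w_nonneg sym deg k, of G] by (auto simp: G_def)
  moreover have "2 * dirichlet_energy n w (\<phi> i) < 2 * dirichlet_energy n w f / k"
    using i by (simp add: G_def c_def)
  ultimately show ?thesis using i unfolding G_def \<phi>_def by force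
qed

lemma dirichlet_energy_zero_imp_edge_const:
  assumes w_nonneg: "\<forall>u<n. \<forall>v<n. 0 \<le> w u v" and E: "dirichlet_energy n w f = 0"
    and uv: "u < n" "v < n" "w u v \<noteq> 0"
  shows "f u = f v"
proof -
  have "(\<Sum>u<n. \<Sum>v<n. w u v * (f u - f v)\<^sup>2) = 0" using E by (simp add: dirichlet_energy_def)
  hence "(\<Sum>v<n. w u v * (f u - f v)\<^sup>2) = 0"
    using uv w_nonneg by (subst (asm) sum_nonneg_eq_0_iff) (auto intro!: sum_nonneg)
  hence "w u v * (f u - f v)\<^sup>2 = 0"
    using uv w_nonneg by (subst (asm) sum_nonneg_eq_0_iff) auto
  thus ?thesis using uv by simp
qed

lemma dirichlet_energy_zero_few_values:
  assumes w_nonneg: "\<forall>u<n. \<forall>v<n. 0 \<le> w u v" and sym: "\<forall>u<n. \<forall>v<n. w u v = w v u"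
    and deg: "\<forall>v<n. 0 < wdeg n w v" and k: "1 \<le> k" "k \<le> n"
    and eig_pos: "0 < lap_eig n w k" and E: "dirichlet_energy n w f = 0"
  shows "card (f ` {..<n}) < k"
proof (rule ccontr)
  assume many: "\<not> ?thesis"
  define \<phi> where "\<phi> s v = (of_bool (f v = s) :: real)" for s v
  have "disjointly_supported n (f ` {..<n}) \<phi>"
    by (auto simp: disjointly_supported_def \<phi>_def)
  moreover have "k \<le> card (f ` {..<n})" using many by simp
  ultimately obtain s where s: "s \<in> f ` {..<n}"
      and le: "lap_eig n w k * wnorm2 n w (\<phi> s) \<le> 2 * dirichlet_energy n w (\<phi> s)"
    using disjointly_supported_energy_ge[OF w_nonneg sym deg k finite_imageI[OF finite_lessThan]]
    by blast
  txt \<open>The level set of \<open>s\<close> is a union of components, so its indicator has zero energy.\<close>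
  have "(\<Sum>u<n. \<Sum>v<n. w u v * (\<phi> s u - \<phi> s v)\<^sup>2) = 0"
    using dirichlet_energy_zero_imp_edge_const[OF w_nonneg E]
    by (intro sum.neutral ballI) (auto simp: \<phi>_def)
  hence "dirichlet_energy n w (\<phi> s) = 0" by (simp add: dirichlet_energy_def)
  moreover obtain v where v: "v < n" "f v = s" using s by auto
  hence "0 < wnorm2 n w (\<phi> s)"
    unfolding wnorm2_def using deg
    by (intro sum_pos2[of _ v]) (auto simp: \<phi>_def)
  ultimately show False using le eig_pos by (smt (verit) mult_pos_pos)
qed

lemma thresholds_through_values:
  fixes S :: "real set"
  assumes S: "finite S" "\<forall>x\<in>S. 0 \<le> x \<and> x \<le> M" and M: "0 \<le> M" and card: "card S < m"
  shows "\<exists>t. t 0 = 0 \<and> (\<forall>i<m. t i \<le> t (Suc i)) \<and> t m = M \<and> S \<subseteq> t ` {..m}"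
proof -
  define xs where "xs = sorted_list_of_set (insert 0 S)"
  have set_xs: "set xs = insert 0 S" unfolding xs_def using S(1) by (intro sorted_list_of_set(1)) simp
  have sorted: "sorted xs" unfolding xs_def by (rule sorted_sorted_list_of_set)
  have "length xs = card (insert 0 S)" unfolding xs_def by (rule length_sorted_list_of_set)
  also have "\<dots> \<le> Suc (card S)" by (simp add: card_insert_if S(1))
  finally have len: "length xs \<le> m" using card by simp
  have xs_range: "0 \<le> xs ! i \<and> xs ! i \<le> M" if "i < length xs" for i
    using nth_mem[OF that] S M set_xs by auto
  define t where "t i = (if i < length xs then xs ! i else M)" for i
  show ?thesis
  proof (intro exI conjI allI impI)
    obtain j where j: "j < length xs" "xs ! j = 0" using set_xs by (metis in_set_conv_nth insertI1)
    hence "0 < length xs" by linarith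
    thus "t 0 = 0" using j xs_range[of 0] sorted_nth_mono[OF sorted, of 0 j] by (simp add: t_def)
    show "t i \<le> t (Suc i)" for i
      using sorted_nth_mono[OF sorted, of i "Suc i"] xs_range by (auto simp: t_def)
    show "t m = M" using len by (simp add: t_def)
    show "S \<subseteq> t ` {..m}"
    proof
      fix x assume "x \<in> S"
      then obtain i where "i < length xs" "xs ! i = x" using set_xs by (metis in_set_conv_nth insertI2)
      thus "x \<in> t ` {..m}" using len by (force simp: t_def)
    qed
  qed
qed

lemma step_approx_exact:
  assumes g: "is_step_approx n k t f g" and f: "\<forall>v<n. f v \<in> t ` {..2 * k}"
  shows "wnorm2 n w (\<lambda>v. f v - g v) = 0"
proof -
  have "f v - g v = 0" if v: "v < n" for v
  proof -
    obtain i where "i \<le> 2 * k" "t i = f v" using f v by fastforce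
    thus ?thesis using g v unfolding is_step_approx_def by fastforce
  qed
  thus ?thesis by (simp add: wnorm2_def)
qed

lemma step_thresholds_zero_energy:
  assumes w_nonneg: "\<forall>u<n. \<forall>v<n. 0 \<le> w u v" and sym: "\<forall>u<n. \<forall>v<n. w u v = w v u"
    and deg: "\<forall>v<n. 0 < wdeg n w v" and k: "1 \<le> k" "k \<le> n"
    and eig_pos: "0 < lap_eig n w k" and f_nonneg: "\<forall>v<n. 0 \<le> f v"
    and E: "dirichlet_energy n w f = 0"
  shows "\<exists>t. t 0 = 0 \<and> (\<forall>i<2 * k. t i \<le> t (Suc i)) \<and> t (2 * k) = Max (f ` {..<n})
           \<and> (\<forall>g. is_step_approx n k t f g \<longrightarrow> wnorm2 n w (\<lambda>v. f v - g v) = 0)"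
proof -
  let ?M = "Max (f ` {..<n})"
  have "card (f ` {..<n}) < 2 * k"
    using dirichlet_energy_zero_few_values[OF w_nonneg sym deg k eig_pos E] by simp
  moreover have "\<forall>x\<in>f ` {..<n}. 0 \<le> x \<and> x \<le> ?M" using f_nonneg by auto
  moreover have "0 \<le> ?M" using f_nonneg k by (intro order.trans[OF _ Max_ge[of _ "f 0"]]) auto
  ultimately obtain t where "t 0 = 0" "\<forall>i<2 * k. t i \<le> t (Suc i)" "t (2 * k) = ?M"
      "f ` {..<n} \<subseteq> t ` {..2 * k}"
    using thresholds_through_values[of "f ` {..<n}" ?M "2 * k"] by auto
  thus ?thesis using step_approx_exact[of n k t f] by blast
qed

theorem balanced_tent_thresholds:
  assumes w_nonneg: "\<forall>u<n. \<forall>v<n. 0 \<le> w u v" and sym: "\<forall>u<n. \<forall>v<n. w u v = w v u"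
    and deg: "\<forall>v<n. 0 < wdeg n w v" and k: "1 \<le> k" "k \<le> n"
    and eig_pos: "0 < lap_eig n w k" and f_nonneg: "\<forall>v<n. 0 \<le> f v"
    and E: "0 < dirichlet_energy n w f"
  shows "\<exists>t. t 0 = 0 \<and> (\<forall>i. t i \<le> t (Suc i)) \<and> t (2 * k) = Max (f ` {..<n})
           \<and> (\<forall>i. lap_eig n w k * wnorm2 n w (\<lambda>v. tent (t i) (t (Suc i)) (f v))
                   \<le> 2 * dirichlet_energy n w f / k)"
proof -
  define M where "M = Max (f ` {..<n})"
  have "0 \<le> M" unfolding M_def using f_nonneg k by (intro order.trans[OF _ Max_ge[of _ "f 0"]]) auto
  define C where "C = 2 * dirichlet_energy n w f / (k * lap_eig n w k)"
  define mass where "mass a b = wnorm2 n w (\<lambda>v. tent a b (f v))" for a b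
  have "0 < C" using E eig_pos k by (simp add: C_def)
  moreover have "continuous_on {a..M} (mass a)" for a
    unfolding mass_def wnorm2_def tent_def by (intro continuous_intros)
  moreover have "mass a a = 0" for a by (simp add: mass_def wnorm2_def tent_def)
  ultimately obtain t where t0: "t 0 = 0" and t: "\<And>i. t i \<le> t (Suc i) \<and> t (Suc i) \<le> M
      \<and> mass (t i) (t (Suc i)) \<le> C \<and> (t (Suc i) < M \<longrightarrow> mass (t i) (t (Suc i)) = C)"
    using greedy_thresholds[of C M mass, OF _ \<open>0 \<le> M\<close>] by metis
  have t_Suc: "t i \<le> t (Suc i)" for i using t by blast
  have "t (2 * k) \<le> M" using t[of "2 * k - 1"] k by simp
  moreover have "\<not> t (2 * k) < M"
  proof
    txt \<open>Otherwise all \<open>2k\<close> tents carry mass exactly \<open>C\<close>, but one of them is lighter.\<close>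
    assume "t (2 * k) < M"
    hence "lap_eig n w k * mass (t i) (t (Suc i)) = 2 * dirichlet_energy n w f / k"
      if "i < 2 * k" for i
      using t[of i] lift_Suc_mono_le[of t, OF t_Suc, of "Suc i" "2 * k"] that eig_pos
      by (simp add: C_def)
    moreover obtain i where "i < 2 * k"
        "lap_eig n w k * mass (t i) (t (Suc i)) < 2 * dirichlet_energy n w f / k"
      using exists_light_tent[where t = t, OF w_nonneg sym deg k t_Suc E] unfolding mass_def by blast
    ultimately show False by simp
  qed
  ultimately have "t (2 * k) = M" by simp
  moreover have "lap_eig n w k * mass (t i) (t (Suc i)) \<le> 2 * dirichlet_energy n w f / k" for i
  proof -
    have "lap_eig n w k * mass (t i) (t (Suc i)) \<le> lap_eig n w k * C"
      using t[of i] eig_pos by (intro mult_left_mono) auto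
    thus ?thesis using eig_pos by (simp add: C_def)
  qed
  ultimately show ?thesis using t0 t_Suc unfolding M_def mass_def by blast
qed

lemma step_thresholds_positive_energy:
  assumes w_nonneg: "\<forall>u<n. \<forall>v<n. 0 \<le> w u v" and sym: "\<forall>u<n. \<forall>v<n. w u v = w v u"
    and deg: "\<forall>v<n. 0 < wdeg n w v" and k: "1 \<le> k" "k \<le> n"
    and eig_pos: "0 < lap_eig n w k" and f_nonneg: "\<forall>v<n. 0 \<le> f v"
    and E: "0 < dirichlet_energy n w f"
  shows "\<exists>t. t 0 = 0 \<and> (\<forall>i<2 * k. t i \<le> t (Suc i)) \<and> t (2 * k) = Max (f ` {..<n})
           \<and> (\<forall>g. is_step_approx n k t f g \<longrightarrow>
                 wnorm2 n w (\<lambda>v. f v - g v) \<le> 4 * dirichlet_energy n w f / lap_eig n w k)"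
proof -
  obtain t where t0: "t 0 = 0" and t_Suc: "\<forall>i. t i \<le> t (Suc i)"
      and tM: "t (2 * k) = Max (f ` {..<n})"
      and light: "\<And>i. lap_eig n w k * wnorm2 n w (\<lambda>v. tent (t i) (t (Suc i)) (f v))
                     \<le> 2 * dirichlet_energy n w f / k"
    using balanced_tent_thresholds[OF w_nonneg sym deg k eig_pos f_nonneg E] by blast
  have "wnorm2 n w (\<lambda>v. f v - g v) \<le> 4 * dirichlet_energy n w f / lap_eig n w k"
    if g: "is_step_approx n k t f g" for g
  proof -
    have "wnorm2 n w (\<lambda>v. f v - g v) \<le> (\<Sum>i<2 * k. wnorm2 n w (\<lambda>v. tent (t i) (t (Suc i)) (f v)))"
    proof (rule step_approx_error_le_tents[OF _ k(1) _ _ g])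
      show "\<forall>v<n. 0 \<le> wdeg n w v" using deg by (simp add: less_imp_le)
      show "\<forall>i<2 * k. t i \<le> t (Suc i)" using t_Suc by simp
      show "\<forall>v<n. t 0 \<le> f v \<and> f v \<le> t (2 * k)" using f_nonneg t0 tM by simp
    qed
    also have "\<dots> \<le> (\<Sum>i<2 * k. 2 * dirichlet_energy n w f / k / lap_eig n w k)"
      using light eig_pos by (intro sum_mono) (simp add: pos_le_divide_eq mult_ac)
    also have "\<dots> = 4 * dirichlet_energy n w f / lap_eig n w k"
      using k by (simp add: field_simps)
    finally show ?thesis .
  qed
  thus ?thesis using t0 t_Suc tM by blast
qed

theorem mainTheorem7:
  fixes n k :: nat and w :: "nat \<Rightarrow> nat \<Rightarrow> real" and f :: "nat \<Rightarrow> real"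
  assumes w_nonneg: "\<forall>u<n. \<forall>v<n. w u v \<ge> 0"
    and w_sym: "\<forall>u<n. \<forall>v<n. w u v = w v u"
    and deg_ge1: "\<forall>v<n. wdeg n w v \<ge> 1"
    and k_ge1: "1 \<le> k" and k_le_n: "k \<le> n"
    and eig_pos: "lap_eig n w k > 0"
    and f_nonneg: "\<forall>v<n. f v \<ge> 0"
    and f_unit: "wnorm2 n w f = 1"
  shows "\<exists>t :: nat \<Rightarrow> real. t 0 = 0 \<and> (\<forall>i<2*k. t i \<le> t (Suc i))
           \<and> t (2*k) = Max (f ` {..<n})
           \<and> (\<forall>g. is_step_approx n k t f g \<longrightarrow>
                 wnorm2 n w (\<lambda>v. f v - g v) \<le> 4 * rayleigh n w f / lap_eig n w k)"
proof -
  have deg: "\<forall>v<n. 0 < wdeg n w v" using deg_ge1 by (auto intro: order.strict_trans2[OF zero_less_one])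
  have ray: "rayleigh n w f = dirichlet_energy n w f"
    using f_unit by (simp add: rayleigh_eq_dirichlet_energy)
  consider (zero) "dirichlet_energy n w f = 0" | (positive) "0 < dirichlet_energy n w f"
    using dirichlet_energy_nonneg[OF w_nonneg, of f] by fastforce
  then show ?thesis
  proof cases
    case zero
    obtain t where "t 0 = 0" "\<forall>i<2 * k. t i \<le> t (Suc i)" "t (2 * k) = Max (f ` {..<n})"
        "\<forall>g. is_step_approx n k t f g \<longrightarrow> wnorm2 n w (\<lambda>v. f v - g v) = 0"
      using step_thresholds_zero_energy[OF w_nonneg w_sym deg k_ge1 k_le_n eig_pos f_nonneg zero]
      by blast
    then show ?thesis using zero ray by (intro exI[of _ t]) auto
  next
    case positive
    show ?thesis unfolding ray
      by (rule step_thresholds_positive_energy[OF w_nonneg w_sym deg k_ge1 k_le_n eig_pos f_nonneg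
            positive])
  qed
qed

end
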